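(* Let $\lambda\in\mathbb{R}$, $\eta\le1$. Let $\theta_k,z_k\in\mathbb{R}^d$ with $\|e_k\|\le(1-\eta)\|z_k\|$ where $e_k=z_k-\nabla f(\theta_k)$; let $\alpha_k\in\mathbb{R}$, $\theta_{k+1}=\theta_k-\alpha_kz_k$, $\epsilon_k,\epsilon_{k+1}\ge0$, and $\tilde{x}(\theta_k),\tilde{x}(\theta_{k+1})\in\mathbb{R}^n$ with $\|\tilde{x}(\theta_j)-\hat{x}(\theta_j)\|\le\epsilon_j$ for $j=k,k+1$. Set $w_k=\|\nabla g(\tilde{x}(\theta_k))\|+\|\nabla g(\tilde{x}(\theta_{k+1}))\|$, $\bar{\epsilon}_k=\max\{\epsilon_k,\epsilon_{k+1}\}$ and $$\phi(\alpha_k)=2w_k\bar{\epsilon}_k+2L_{\nabla g}\bar{\epsilon}_k^2+\Big(\alpha_k^2\frac{L_{\nabla f}}{2}+(\lambda-\eta)\alpha_k\Big)\|z_k\|^2.$$ Then $\psi(\alpha_k)\le\phi(\alpha_k)$, where $\psi(\alpha_k)=\overline{U}(\tilde{x}(\theta_{k+1}),\epsilon_{k+1})-\underline{U}(\tilde{x}(\theta_k),\epsilon_k)+\lambda\alpha_k\|z_k\|^2$.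
   Context: $g:\mathbb{R}^n\to\mathbb{R}$ is continuously differentiable with $L_{\nabla g}$-Lipschitz gradient; $\hat{x}(\theta)=\arg\min_xh(x,\theta)$ for a lower-level function $h:\mathbb{R}^n\times\mathbb{R}^d\to\mathbb{R}$ strongly convex in $x$; $f(\theta)=g(\hat{x}(\theta))$ is continuously differentiable with $L_{\nabla f}$-Lipschitz gradient. $\overline{U}(x,\epsilon)=g(x)+\|\nabla g(x)\|\epsilon+\frac{L_{\nabla g}}{2}\epsilon^2$, $\underline{U}(x,\epsilon)=g(x)-\|\nabla g(x)\|\epsilon-\frac{L_{\nabla g}}{2}\epsilon^2$. Norm is Euclidean. *)

theory Defs
  imports "HOL-Analysis.Analysis"
begin

definition strongly_convex :: "('a::real_normed_vector \<Rightarrow> real) \<Rightarrow> bool" where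
  "strongly_convex \<phi> \<longleftrightarrow> (\<exists>\<mu>>0. \<forall>x y. \<forall>t::real. 0 \<le> t \<and> t \<le> 1 \<longrightarrow>
      \<phi> (t *\<^sub>R x + (1 - t) *\<^sub>R y) \<le> t * \<phi> x + (1 - t) * \<phi> y - \<mu> / 2 * t * (1 - t) * (norm (x - y))\<^sup>2)"

text \<open>Upper and lower bounds U-bar and U-underbar; G is the gradient of g, L its Lipschitz constant.\<close>
definition Ubar :: "('a \<Rightarrow> real) \<Rightarrow> ('a \<Rightarrow> 'a::real_normed_vector) \<Rightarrow> real \<Rightarrow> 'a \<Rightarrow> real \<Rightarrow> real" where
  "Ubar g G L x \<epsilon> = g x + norm (G x) * \<epsilon> + L / 2 * \<epsilon>\<^sup>2"

definition Ulow :: "('a \<Rightarrow> real) \<Rightarrow> ('a \<Rightarrow> 'a::real_normed_vector) \<Rightarrow> real \<Rightarrow> 'a \<Rightarrow> real \<Rightarrow> real" where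
  "Ulow g G L x \<epsilon> = g x - norm (G x) * \<epsilon> - L / 2 * \<epsilon>\<^sup>2"

end

theory Submission
  imports Defs
begin

text \<open>
  Everything rests on the two-sided descent lemma: a function with L-Lipschitz gradient differs
  from its linearisation at x by at most L/2 |y - x|^2. For g at an inexact solution x~ with
  |x~ - x^(theta)| <= eps it shows that Ulow and Ubar at (x~, eps) bracket g (x^(theta)) = f theta.
  Hence Ubar at x~_k+1 minus Ulow at x~_k is at most f(theta_k+1) - f(theta_k) plus the two bracket
  widths 2 |grad g x~| eps + L_g eps^2, each of which grows with eps. For f along the step
  theta_k - alpha z, the relative error bound gives grad f(theta_k) . z >= eta |z|^2, so
  f(theta_k+1) - f(theta_k) <= (alpha^2 L_f / 2 - eta alpha) |z|^2.
\<close>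

lemma DERIV_linear_bound_imp_quadratic_bound:
  fixes \<phi> \<phi>' :: "real \<Rightarrow> real"
  assumes "a \<le> b"
    and deriv: "\<And>t. a \<le> t \<Longrightarrow> t \<le> b \<Longrightarrow> (\<phi> has_real_derivative \<phi>' t) (at t)"
    and bound: "\<And>t. a \<le> t \<Longrightarrow> t \<le> b \<Longrightarrow> \<bar>\<phi>' t\<bar> \<le> c * (t - a)"
  shows "\<bar>\<phi> b - \<phi> a\<bar> \<le> c / 2 * (b - a)\<^sup>2"
proof -
  define u where "u t = \<phi> t - c / 2 * (t - a)\<^sup>2" for t
  define v where "v t = \<phi> t + c / 2 * (t - a)\<^sup>2" for t
  have "u b \<le> u a"
  proof (rule DERIV_nonpos_imp_nonincreasing[OF \<open>a \<le> b\<close>])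
    fix t assume t: "a \<le> t" "t \<le> b"
    have "(u has_real_derivative \<phi>' t - c * (t - a)) (at t)"
      unfolding u_def by (auto intro!: derivative_eq_intros deriv[OF t] simp: field_simps)
    then show "\<exists>y. (u has_real_derivative y) (at t) \<and> y \<le> 0"
      using bound[OF t] by force
  qed
  moreover have "v a \<le> v b"
  proof (rule DERIV_nonneg_imp_nondecreasing[OF \<open>a \<le> b\<close>])
    fix t assume t: "a \<le> t" "t \<le> b"
    have "(v has_real_derivative \<phi>' t + c * (t - a)) (at t)"
      unfolding v_def by (auto intro!: derivative_eq_intros deriv[OF t] simp: field_simps)
    then show "\<exists>y. (v has_real_derivative y) (at t) \<and> y \<ge> 0"
      using bound[OF t] by force
  qed
  ultimately show ?thesis
    unfolding u_def v_def abs_le_iff by simp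
qed

lemma has_real_derivative_along_line:
  assumes "(g has_derivative (\<lambda>v. G (x + t *\<^sub>R d) \<bullet> v)) (at (x + t *\<^sub>R d))"
  shows "((\<lambda>s. g (x + s *\<^sub>R d)) has_real_derivative G (x + t *\<^sub>R d) \<bullet> d) (at t)"
proof -
  have "((\<lambda>s. x + s *\<^sub>R d) has_derivative (\<lambda>s. s *\<^sub>R d)) (at t)"
    by (auto intro!: derivative_eq_intros)
  from has_derivative_compose[OF this assms]
  show ?thesis
    unfolding has_field_derivative_def by (simp add: mult.commute[of _ "G (x + t *\<^sub>R d) \<bullet> d"])
qed

lemma lipschitz_gradient_taylor_bound:
  fixes g :: "'a::real_inner \<Rightarrow> real" and G :: "'a \<Rightarrow> 'a"
  assumes grad: "\<And>z. z \<in> closed_segment x y \<Longrightarrow> (g has_derivative (\<lambda>v. G z \<bullet> v)) (at z)"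
    and lip: "L-lipschitz_on (closed_segment x y) G"
  shows "\<bar>g y - g x - G x \<bullet> (y - x)\<bar> \<le> L / 2 * (norm (y - x))\<^sup>2"
proof -
  define d where "d = y - x"
  have on_segment: "x + t *\<^sub>R d \<in> closed_segment x y" if "0 \<le> t" "t \<le> 1" for t
    using that unfolding d_def closed_segment_def
    by (intro CollectI exI[of _ t]) (simp add: algebra_simps)
  have "\<bar>g (x + 1 *\<^sub>R d) - 1 * (G x \<bullet> d) - (g (x + 0 *\<^sub>R d) - 0 * (G x \<bullet> d))\<bar>
      \<le> L * (norm d)\<^sup>2 / 2 * (1 - 0)\<^sup>2"
  proof (rule DERIV_linear_bound_imp_quadratic_bound)
    fix t :: real assume t: "0 \<le> t" "t \<le> 1"
    show "((\<lambda>t. g (x + t *\<^sub>R d) - t * (G x \<bullet> d)) has_real_derivative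
        G (x + t *\<^sub>R d) \<bullet> d - G x \<bullet> d) (at t)"
      by (rule derivative_eq_intros has_real_derivative_along_line grad on_segment t | simp)+
    have "\<bar>G (x + t *\<^sub>R d) \<bullet> d - G x \<bullet> d\<bar> \<le> norm (G (x + t *\<^sub>R d) - G x) * norm d"
      by (metis Cauchy_Schwarz_ineq2 inner_diff_left)
    also have "\<dots> \<le> L * (t * norm d) * norm d"
      using lipschitz_onD[OF lip on_segment[OF t] on_segment[of 0]] t
      by (intro mult_right_mono) (auto simp: dist_norm)
    finally show "\<bar>G (x + t *\<^sub>R d) \<bullet> d - G x \<bullet> d\<bar> \<le> L * (norm d)\<^sup>2 * (t - 0)"
      by (simp add: power2_eq_square algebra_simps)
  qed simp
  then show ?thesis
    unfolding d_def by (simp add: algebra_simps)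
qed

lemma Ulow_le_Ubar_bracket:
  fixes g :: "'a::real_inner \<Rightarrow> real" and G :: "'a \<Rightarrow> 'a"
  assumes grad: "\<And>z. (g has_derivative (\<lambda>v. G z \<bullet> v)) (at z)"
    and lip: "L-lipschitz_on UNIV G"
    and near: "norm (y - x) \<le> \<epsilon>"
  shows "Ulow g G L x \<epsilon> \<le> g y" and "g y \<le> Ubar g G L x \<epsilon>"
proof -
  have taylor: "\<bar>g y - g x - G x \<bullet> (y - x)\<bar> \<le> L / 2 * (norm (y - x))\<^sup>2"
    using lipschitz_on_subset[OF lip] by (intro lipschitz_gradient_taylor_bound grad) auto
  have "\<bar>G x \<bullet> (y - x)\<bar> \<le> norm (G x) * \<epsilon>"
    using Cauchy_Schwarz_ineq2[of "G x" "y - x"] near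
    by (meson mult_left_mono norm_ge_zero order_trans)
  moreover have "L / 2 * (norm (y - x))\<^sup>2 \<le> L / 2 * \<epsilon>\<^sup>2"
    using near lipschitz_on_nonneg[OF lip] by (intro mult_left_mono power_mono) auto
  ultimately show "Ulow g G L x \<epsilon> \<le> g y" "g y \<le> Ubar g G L x \<epsilon>"
    using taylor unfolding Ulow_def Ubar_def abs_le_iff by linarith+
qed

lemma Ubar_minus_Ulow: "Ubar g G L x \<epsilon> - Ulow g G L x \<epsilon> = 2 * norm (G x) * \<epsilon> + L * \<epsilon>\<^sup>2"
  by (simp add: Ubar_def Ulow_def)

lemma Ubar_minus_Ulow_mono:
  assumes "0 \<le> L" "0 \<le> \<epsilon>" "\<epsilon> \<le> \<epsilon>'"
  shows "Ubar g G L x \<epsilon> - Ulow g G L x \<epsilon> \<le> Ubar g G L x \<epsilon>' - Ulow g G L x \<epsilon>'"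
  unfolding Ubar_minus_Ulow
  using assms by (intro add_mono mult_left_mono power_mono) auto

lemma inexact_gradient_inner_lower_bound:
  fixes z F :: "'a::real_inner"
  assumes "norm (z - F) \<le> (1 - \<eta>) * norm z"
  shows "\<eta> * (norm z)\<^sup>2 \<le> F \<bullet> z"
proof -
  have "(norm z)\<^sup>2 - F \<bullet> z = (z - F) \<bullet> z"
    by (simp add: inner_diff_left power2_norm_eq_inner)
  also have "\<dots> \<le> norm (z - F) * norm z"
    by (rule norm_cauchy_schwarz)
  also have "\<dots> \<le> (1 - \<eta>) * norm z * norm z"
    using assms by (rule mult_right_mono) simp
  finally show ?thesis
    by (simp add: power2_eq_square algebra_simps)
qed

lemma inexact_gradient_step_descent:
  fixes f :: "'a::real_inner \<Rightarrow> real" and F :: "'a \<Rightarrow> 'a"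
  assumes grad: "\<And>\<theta>. (f has_derivative (\<lambda>v. F \<theta> \<bullet> v)) (at \<theta>)"
    and lip: "L-lipschitz_on UNIV F"
    and err: "norm (z - F \<theta>) \<le> (1 - \<eta>) * norm z"
    and "0 \<le> \<alpha>"
  shows "f (\<theta> - \<alpha> *\<^sub>R z) - f \<theta> \<le> (\<alpha>\<^sup>2 * L / 2 - \<eta> * \<alpha>) * (norm z)\<^sup>2"
proof -
  have "\<bar>f (\<theta> - \<alpha> *\<^sub>R z) - f \<theta> + \<alpha> * (F \<theta> \<bullet> z)\<bar> \<le> L / 2 * \<alpha>\<^sup>2 * (norm z)\<^sup>2"
    using lipschitz_gradient_taylor_bound[OF grad lipschitz_on_subset[OF lip], of \<theta> "\<theta> - \<alpha> *\<^sub>R z"]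
    by (simp add: power_mult_distrib)
  moreover have "\<alpha> * (\<eta> * (norm z)\<^sup>2) \<le> \<alpha> * (F \<theta> \<bullet> z)"
    using inexact_gradient_inner_lower_bound[OF err] \<open>0 \<le> \<alpha>\<close> by (rule mult_left_mono)
  ultimately show ?thesis
    unfolding abs_le_iff by (simp add: algebra_simps)
qed

theorem lemma3p7:
  fixes g :: "'n::euclidean_space \<Rightarrow> real" and G :: "'n \<Rightarrow> 'n"
    and h :: "'n \<Rightarrow> 'd::euclidean_space \<Rightarrow> real"
    and xhat :: "'d \<Rightarrow> 'n"
    and f :: "'d \<Rightarrow> real" and F :: "'d \<Rightarrow> 'd"
    and Lg Lf lam \<eta> \<alpha> \<epsilon>k \<epsilon>k1 :: real
    and \<theta>k \<theta>k1 zk :: 'd and xtk xtk1 :: 'n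
  assumes g_grad: "\<And>x. (g has_derivative (\<lambda>v. G x \<bullet> v)) (at x)"
    and G_cont: "continuous_on UNIV G"
    and G_lip: "Lg-lipschitz_on UNIV G"
    and h_sc: "\<And>\<theta>. strongly_convex (\<lambda>x. h x \<theta>)"
    and xhat_min: "\<And>\<theta> x. h (xhat \<theta>) \<theta> \<le> h x \<theta>"
    and f_def: "\<And>\<theta>. f \<theta> = g (xhat \<theta>)"
    and f_grad: "\<And>\<theta>. (f has_derivative (\<lambda>v. F \<theta> \<bullet> v)) (at \<theta>)"
    and F_cont: "continuous_on UNIV F"
    and F_lip: "Lf-lipschitz_on UNIV F"
    and eta: "\<eta> \<le> 1"
    and err: "norm (zk - F \<theta>k) \<le> (1 - \<eta>) * norm zk"
    and alpha_nonneg: "0 \<le> \<alpha>"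
    and step: "\<theta>k1 = \<theta>k - \<alpha> *\<^sub>R zk"
    and eps_k: "0 \<le> \<epsilon>k" and eps_k1: "0 \<le> \<epsilon>k1"
    and approx_k: "norm (xtk - xhat \<theta>k) \<le> \<epsilon>k"
    and approx_k1: "norm (xtk1 - xhat \<theta>k1) \<le> \<epsilon>k1"
  shows "Ubar g G Lg xtk1 \<epsilon>k1 - Ulow g G Lg xtk \<epsilon>k + lam * \<alpha> * (norm zk)\<^sup>2
     \<le> 2 * (norm (G xtk) + norm (G xtk1)) * max \<epsilon>k \<epsilon>k1
       + 2 * Lg * (max \<epsilon>k \<epsilon>k1)\<^sup>2
       + (\<alpha>\<^sup>2 * Lf / 2 + (lam - \<eta>) * \<alpha>) * (norm zk)\<^sup>2"
proof -
  have Lg: "0 \<le> Lg"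
    using lipschitz_on_nonneg[OF G_lip] .
  define \<epsilon> where "\<epsilon> = max \<epsilon>k \<epsilon>k1"
  have f_step: "f \<theta>k1 - f \<theta>k \<le> (\<alpha>\<^sup>2 * Lf / 2 - \<eta> * \<alpha>) * (norm zk)\<^sup>2"
    unfolding step by (rule inexact_gradient_step_descent[OF f_grad F_lip err alpha_nonneg])
  have "Ulow g G Lg xtk1 \<epsilon>k1 \<le> f \<theta>k1" "f \<theta>k \<le> Ubar g G Lg xtk \<epsilon>k"
    using approx_k1 approx_k unfolding f_def
    by (auto intro: Ulow_le_Ubar_bracket[OF g_grad G_lip] simp: norm_minus_commute)
  moreover have "Ubar g G Lg xtk1 \<epsilon>k1 - Ulow g G Lg xtk1 \<epsilon>k1 \<le> Ubar g G Lg xtk1 \<epsilon> - Ulow g G Lg xtk1 \<epsilon>"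
      "Ubar g G Lg xtk \<epsilon>k - Ulow g G Lg xtk \<epsilon>k \<le> Ubar g G Lg xtk \<epsilon> - Ulow g G Lg xtk \<epsilon>"
    unfolding \<epsilon>_def using Lg eps_k eps_k1 by (auto intro: Ubar_minus_Ulow_mono)
  moreover have "(Ubar g G Lg xtk \<epsilon> - Ulow g G Lg xtk \<epsilon>) + (Ubar g G Lg xtk1 \<epsilon> - Ulow g G Lg xtk1 \<epsilon>)
      = 2 * (norm (G xtk) + norm (G xtk1)) * \<epsilon> + 2 * Lg * \<epsilon>\<^sup>2"
    by (simp add: Ubar_minus_Ulow algebra_simps)
  moreover have "(\<alpha>\<^sup>2 * Lf / 2 - \<eta> * \<alpha>) * (norm zk)\<^sup>2 + lam * \<alpha> * (norm zk)\<^sup>2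
      = (\<alpha>\<^sup>2 * Lf / 2 + (lam - \<eta>) * \<alpha>) * (norm zk)\<^sup>2"
    by (simp add: algebra_simps)
  ultimately show ?thesis
    using f_step unfolding \<epsilon>_def[symmetric] by linarith
qed

end
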